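(* Let $A > 0$ and let $a, b, a', b'$ be complex numbers such that $2|a| e^{|b|+1} \le A$, $|b - b'| < \epsilon$, $|a - a'| < \epsilon |a|$, and $\epsilon < \min(1/e, 1/A)$. Then $$\| Y(b) X(a) Y(-b) - Y(b') X(a') Y(-b') \| \le 12\, e^{A + |b|} |a|\, \epsilon.$$
   Context: For $U \in \mathfrak{sl}_2(\mathbb{C})$ and $t\in\mathbb{C}$, $U(t) = \exp(tU)$. $X = \begin{pmatrix} 1/2 & 0 \\ 0 & -1/2 \end{pmatrix}$, $\theta = \begin{pmatrix} 0 & -1/2 \\ 1/2 & 0\end{pmatrix}$, $Y = \exp(\tfrac{\pi}{2}\theta) X \exp(-\tfrac{\pi}{2}\theta)$. $\|\cdot\|$ is the operator norm on $M_2(\mathbb{C})$ with respect to the standard Hermitian norm. *)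

theory Defs
  imports "HOL-Analysis.Analysis"
begin

type_synonym cmat = "complex^2^2"

definition mk2 :: "complex \<Rightarrow> complex \<Rightarrow> complex \<Rightarrow> complex \<Rightarrow> cmat" where
  "mk2 p q r s = (\<chi> i j. if i = 1 then (if j = 1 then p else q) else (if j = 1 then r else s))"

definition smat :: "complex \<Rightarrow> cmat \<Rightarrow> cmat" where
  "smat t M = (\<chi> i j. t * M$i$j)"

primrec mpow :: "cmat \<Rightarrow> nat \<Rightarrow> cmat" where
  "mpow M 0 = mat 1"
| "mpow M (Suc n) = M ** mpow M n"

definition mexp :: "cmat \<Rightarrow> cmat" where
  "mexp M = (\<Sum>n. (1 / fact n) *\<^sub>R mpow M n)"

definition oneparam :: "cmat \<Rightarrow> complex \<Rightarrow> cmat" where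
  "oneparam U t = mexp (smat t U)"

definition opnorm :: "cmat \<Rightarrow> real" where
  "opnorm M = onorm (\<lambda>v. M *v v)"

definition Xm :: cmat where
  "Xm = mk2 (1/2) 0 0 (-1/2)"

definition thetam :: cmat where
  "thetam = mk2 0 (-1/2) (1/2) 0"

definition Ym :: cmat where
  "Ym = oneparam thetam (complex_of_real (pi/2)) ** Xm ** oneparam thetam (complex_of_real (-pi/2))"

end

theory Submission
  imports Defs
begin

(* Y = [[0,1/2],[1/2,0]] is diagonalised by a real change of basis, so Y(b) is a hyperbolic
   rotation with entries cosh(b/2), sinh(b/2), while X(a) = diag(e^(a/2), e^(-a/2)). Hence
   Y(b) X(a) Y(-b) = cosh(a/2) I + sinh(a/2) [[cosh b, -sinh b], [sinh b, -cosh b]], and the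
   operator norm of a difference of two such matrices is bounded by the sum of its entries.
   Everything then follows from |e^z - e^w| <= |z - w| e^(|z - w|) e^(|w|): perturbing a costs
   eps |a| e^(|a|), perturbing b costs a factor 2 eps e^(|b|), for a total of
   11 e^(|a| + |b|) |a| eps, and |a| <= A. *)

lemma norm_exp_diff_le:
  fixes z w :: "'a::{real_normed_field,banach}"
  shows "norm (exp z - exp w) \<le> norm (z - w) * exp (norm (z - w)) * exp (norm w)"
proof -
  have "norm (exp z - exp w) \<le> exp (norm w + norm (z - w)) * norm (z - w)"
  proof (rule field_differentiable_bound[of "cball w (norm (z - w))" exp exp])
    fix \<zeta> assume "\<zeta> \<in> cball w (norm (z - w))"
    then have "norm \<zeta> \<le> norm w + norm (z - w)"
      using norm_triangle_sub[of \<zeta> w] by (simp add: dist_norm norm_minus_commute)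
    then show "norm (exp \<zeta>) \<le> exp (norm w + norm (z - w))"
      using norm_exp[of \<zeta>] by (meson exp_le_cancel_iff order_trans)
  qed (auto intro: DERIV_exp has_field_derivative_at_within simp: dist_norm norm_minus_commute)
  then show ?thesis
    by (simp add: exp_add mult_ac)
qed

lemma norm_cosh_diff_le:
  fixes z w :: "'a::{real_normed_field,banach}"
  shows "norm (cosh z - cosh w) \<le> norm (z - w) * exp (norm (z - w)) * exp (norm w)"
proof -
  have eq: "cosh z - cosh w = ((exp z - exp w) + (exp (- z) - exp (- w))) / 2"
    by (simp add: cosh_field_def field_simps)
  have "norm (cosh z - cosh w) \<le> (norm (exp z - exp w) + norm (exp (- z) - exp (- w))) / 2"
    unfolding eq norm_divide by (simp add: divide_right_mono norm_triangle_ineq)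
  also have "\<dots> \<le> norm (z - w) * exp (norm (z - w)) * exp (norm w)"
    using norm_exp_diff_le[of z w] norm_exp_diff_le[of "- z" "- w"]
    by (simp add: norm_minus_commute)
  finally show ?thesis .
qed

lemma norm_sinh_diff_le:
  fixes z w :: "'a::{real_normed_field,banach}"
  shows "norm (sinh z - sinh w) \<le> norm (z - w) * exp (norm (z - w)) * exp (norm w)"
proof -
  have eq: "sinh z - sinh w = ((exp z - exp w) - (exp (- z) - exp (- w))) / 2"
    by (simp add: sinh_field_def field_simps)
  have "norm (sinh z - sinh w) \<le> (norm (exp z - exp w) + norm (exp (- z) - exp (- w))) / 2"
    unfolding eq norm_divide by (simp add: divide_right_mono norm_triangle_ineq4)
  also have "\<dots> \<le> norm (z - w) * exp (norm (z - w)) * exp (norm w)"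
    using norm_exp_diff_le[of z w] norm_exp_diff_le[of "- z" "- w"]
    by (simp add: norm_minus_commute)
  finally show ?thesis .
qed

lemma norm_sinh_le:
  fixes z :: "'a::{real_normed_field,banach}"
  shows "norm (sinh z) \<le> norm z * exp (norm z)"
  using norm_sinh_diff_le[of z 0] by simp

lemma norm_cosh_le_exp_norm:
  fixes z :: "'a::{real_normed_field,banach}"
  shows "norm (cosh z) \<le> exp (norm z)"
proof -
  have "norm (cosh z) \<le> (norm (exp z) + norm (exp (- z))) / 2"
    by (simp add: cosh_field_def norm_divide divide_right_mono norm_triangle_ineq)
  also have "\<dots> \<le> exp (norm z)"
    using norm_exp[of z] norm_exp[of "- z"] by simp
  finally show ?thesis .
qed

lemma norm_sinh_le_exp_norm:
  fixes z :: "'a::{real_normed_field,banach}"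
  shows "norm (sinh z) \<le> exp (norm z)"
proof -
  have "norm (sinh z) \<le> (norm (exp z) + norm (exp (- z))) / 2"
    by (simp add: sinh_field_def norm_divide divide_right_mono norm_triangle_ineq4)
  also have "\<dots> \<le> exp (norm z)"
    using norm_exp[of z] norm_exp[of "- z"] by simp
  finally show ?thesis .
qed

lemma norm_mult_diff_le:
  fixes w w' s s' :: "'a::real_normed_algebra"
  shows "norm (w * s - w' * s') \<le> norm w * norm (s - s') + norm (w - w') * norm s'"
proof -
  have "w * s - w' * s' = w * (s - s') + (w - w') * s'"
    by (simp add: algebra_simps)
  then have "norm (w * s - w' * s') \<le> norm (w * (s - s')) + norm ((w - w') * s')"
    by (simp only: norm_triangle_ineq)
  also have "\<dots> \<le> norm w * norm (s - s') + norm (w - w') * norm s'"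
    by (intro add_mono norm_mult_ineq)
  finally show ?thesis .
qed

lemma exp_perturbation_factor_le:
  assumes "norm (z - w) \<le> r"
  shows "norm (z - w) * exp (norm (z - w)) * exp (norm w) \<le> r * exp (r + norm w)"
proof -
  have "0 \<le> r"
    using assms norm_ge_zero order_trans by blast
  with assms have "norm (z - w) * exp (norm (z - w)) \<le> r * exp r"
    by (intro mult_mono) auto
  then show ?thesis
    by (simp add: exp_add mult.assoc[symmetric] mult_right_mono)
qed

lemma cosh_sinh_half_rel_perturbation:
  fixes a a' :: "'a::{real_normed_field,banach}"
  assumes "norm (a - a') \<le> \<epsilon> * norm a" "\<epsilon> \<le> 1"
  shows "norm (cosh (a/2) - cosh (a'/2)) \<le> \<epsilon> * norm a * exp (norm a) / 2"
    and "norm (sinh (a/2) - sinh (a'/2)) \<le> \<epsilon> * norm a * exp (norm a) / 2"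
    and "norm (sinh (a'/2)) \<le> norm a * exp (norm a)"
proof -
  have "\<epsilon> * norm a \<le> norm a"
    using assms mult_right_mono[of \<epsilon> 1 "norm a"] by simp
  have dist: "norm (a'/2 - a/2) \<le> \<epsilon> * norm a / 2"
    using assms(1) by (simp add: norm_minus_commute norm_divide flip: diff_divide_distrib)
  have "0 \<le> \<epsilon> * norm a"
    using assms(1) norm_ge_zero order_trans by blast
  then have "\<epsilon> * norm a / 2 * exp (\<epsilon> * norm a / 2 + norm (a/2)) \<le> \<epsilon> * norm a * exp (norm a) / 2"
    using \<open>\<epsilon> * norm a \<le> norm a\<close> by (simp add: norm_divide mult_left_mono)
  then have bound: "norm (a'/2 - a/2) * exp (norm (a'/2 - a/2)) * exp (norm (a/2))
      \<le> \<epsilon> * norm a * exp (norm a) / 2"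
    using exp_perturbation_factor_le[OF dist] by linarith
  show "norm (cosh (a/2) - cosh (a'/2)) \<le> \<epsilon> * norm a * exp (norm a) / 2"
    using norm_cosh_diff_le[of "a'/2" "a/2"] bound by (simp add: norm_minus_commute)
  show "norm (sinh (a/2) - sinh (a'/2)) \<le> \<epsilon> * norm a * exp (norm a) / 2"
    using norm_sinh_diff_le[of "a'/2" "a/2"] bound by (simp add: norm_minus_commute)
  have "norm a' \<le> 2 * norm a"
    using norm_triangle_ineq2[of a' a] assms(1) \<open>\<epsilon> * norm a \<le> norm a\<close>
    by (simp add: norm_minus_commute)
  then have "norm (a'/2) * exp (norm (a'/2)) \<le> norm a * exp (norm a)"
    by (intro mult_mono) (simp_all add: norm_divide)
  then show "norm (sinh (a'/2)) \<le> norm a * exp (norm a)"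
    using norm_sinh_le[of "a'/2"] by linarith
qed

lemma cosh_sinh_perturbation:
  fixes b b' :: "'a::{real_normed_field,banach}"
  assumes "norm (b - b') \<le> \<epsilon>" "\<epsilon> \<le> 1/2"
  shows "norm (cosh b - cosh b') \<le> 2 * \<epsilon> * exp (norm b)"
    and "norm (sinh b - sinh b') \<le> 2 * \<epsilon> * exp (norm b)"
proof -
  have "exp \<epsilon> \<le> 2"
    using assms(2) exp_half_le2 by (meson exp_le_cancel_iff order_trans)
  moreover have "0 \<le> \<epsilon>"
    using assms(1) norm_ge_zero order_trans by blast
  ultimately have "\<epsilon> * exp \<epsilon> * exp (norm b) \<le> \<epsilon> * 2 * exp (norm b)"
    by (intro mult_right_mono mult_left_mono) simp_all
  then have "\<epsilon> * exp (\<epsilon> + norm b) \<le> 2 * \<epsilon> * exp (norm b)"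
    by (simp add: exp_add mult_ac)
  moreover have "norm (b' - b) \<le> \<epsilon>"
    using assms(1) by (simp add: norm_minus_commute)
  ultimately have bound: "norm (b' - b) * exp (norm (b' - b)) * exp (norm b) \<le> 2 * \<epsilon> * exp (norm b)"
    using exp_perturbation_factor_le order_trans by blast
  show "norm (cosh b - cosh b') \<le> 2 * \<epsilon> * exp (norm b)"
    using order_trans[OF norm_cosh_diff_le[of b' b] bound] by (simp add: norm_minus_commute)
  show "norm (sinh b - sinh b') \<le> 2 * \<epsilon> * exp (norm b)"
    using order_trans[OF norm_sinh_diff_le[of b' b] bound] by (simp add: norm_minus_commute)
qed

lemma onorm_matrix_le_entry_sum:
  fixes A :: "'a::real_normed_field ^'n^'m"
  shows "onorm ((*v) A) \<le> (\<Sum>i\<in>UNIV. \<Sum>j\<in>UNIV. norm (A $ i $ j))"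
proof (rule onorm_le)
  fix x :: "'a^'n"
  have "norm (A *v x) \<le> (\<Sum>i\<in>UNIV. norm ((A *v x) $ i))"
    unfolding norm_vec_def by (rule L2_set_le_sum) simp
  also have "\<dots> \<le> (\<Sum>i\<in>UNIV. \<Sum>j\<in>UNIV. norm (A $ i $ j) * norm x)"
  proof (rule sum_mono)
    fix i
    have "norm ((A *v x) $ i) \<le> (\<Sum>j\<in>UNIV. norm (A $ i $ j * x $ j))"
      unfolding matrix_vector_mult_def by (simp add: norm_sum)
    also have "\<dots> \<le> (\<Sum>j\<in>UNIV. norm (A $ i $ j) * norm x)"
      unfolding norm_mult by (intro sum_mono mult_left_mono Finite_Cartesian_Product.norm_nth_le norm_ge_zero)
    finally show "norm ((A *v x) $ i) \<le> (\<Sum>j\<in>UNIV. norm (A $ i $ j) * norm x)" .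
  qed
  finally show "norm (A *v x) \<le> (\<Sum>i\<in>UNIV. \<Sum>j\<in>UNIV. norm (A $ i $ j)) * norm x"
    by (simp add: sum_distrib_right)
qed

lemma matrix_conj_sums:
  fixes F :: "nat \<Rightarrow> 'a::real_normed_field ^'n^'m"
  assumes "F sums L"
  shows "(\<lambda>k. P ** F k ** Q) sums (P ** L ** Q)"
proof -
  have partial: "(\<Sum>k<m. P ** F k ** Q) = P ** (\<Sum>k<m. F k) ** Q" for m
    by (induction m) (simp_all add: matrix_matrix_mult_def vec_eq_iff sum.distrib ring_distribs)
  have "(\<lambda>m. P ** (\<Sum>k<m. F k) ** Q) \<longlonglongrightarrow> P ** L ** Q"
    using assms unfolding sums_def matrix_matrix_mult_def
    by (intro tendsto_vec_lambda tendsto_sum tendsto_mult tendsto_const tendsto_vec_nth)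
  then show ?thesis
    unfolding sums_def partial .
qed

lemma mk2_nth [simp]:
  "mk2 p q r s $ 1 $ 1 = p" "mk2 p q r s $ 1 $ 2 = q"
  "mk2 p q r s $ 2 $ 1 = r" "mk2 p q r s $ 2 $ 2 = s"
  by (simp_all add: mk2_def)

lemma cmat_eqI:
  fixes M N :: cmat
  assumes "M$1$1 = N$1$1" "M$1$2 = N$1$2" "M$2$1 = N$2$1" "M$2$2 = N$2$2"
  shows "M = N"
  using assms by (simp add: vec_eq_iff forall_2)

lemma mk2_eq_iff: "mk2 p q r s = mk2 p' q' r' s' \<longleftrightarrow> p = p' \<and> q = q' \<and> r = r' \<and> s = s'"
  by (metis mk2_nth)

lemma mat_1_eq_mk2: "mat 1 = mk2 1 0 0 1"
  by (rule cmat_eqI) (simp_all add: mat_def)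

lemma mk2_mult: "mk2 a b c d ** mk2 e f g h = mk2 (a*e+b*g) (a*f+b*h) (c*e+d*g) (c*f+d*h)"
  by (rule cmat_eqI) (simp_all add: matrix_matrix_mult_def sum_2)

lemma mk2_diff: "mk2 a b c d - mk2 e f g h = mk2 (a-e) (b-f) (c-g) (d-h)"
  by (rule cmat_eqI) simp_all

lemma smat_mk2: "smat t (mk2 a b c d) = mk2 (t*a) (t*b) (t*c) (t*d)"
  by (rule cmat_eqI) (simp_all add: smat_def)

lemma opnorm_mk2_le: "opnorm (mk2 p q r s) \<le> norm p + norm q + norm r + norm s"
  using onorm_matrix_le_entry_sum[of "mk2 p q r s"] by (simp add: opnorm_def sum_2)

lemma opnorm_mk2_symmetric_form_le:
  "opnorm (mk2 (d + x) (- y) y (d - x)) \<le> 2 * (norm d + norm x + norm y)"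
proof -
  have "opnorm (mk2 (d + x) (- y) y (d - x)) \<le> norm (d + x) + norm (- y) + norm y + norm (d - x)"
    by (rule opnorm_mk2_le)
  also have "\<dots> \<le> (norm d + norm x) + norm y + norm y + (norm d + norm x)"
    by (intro add_mono norm_triangle_ineq norm_triangle_ineq4) simp_all
  finally show ?thesis
    by simp
qed

lemma mk2_sums:
  assumes "f sums p" "g sums q" "h sums r" "k sums s"
  shows "(\<lambda>n. mk2 (f n) (g n) (h n) (k n)) sums mk2 p q r s"
  using assms unfolding sums_def
  by (intro vec_tendstoI) (auto simp: sum_component mk2_def intro!: tendsto_intros)

lemma mpow_mk2_diag: "mpow (mk2 x 0 0 y) n = mk2 (x^n) 0 0 (y^n)"
  by (induction n) (simp_all add: mat_1_eq_mk2 mk2_mult)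

lemma mpow_conj:
  assumes "Q ** P = mat 1" "P ** Q = mat 1"
  shows "mpow (P ** M ** Q) n = P ** mpow M n ** Q"
proof (induction n)
  case 0
  show ?case
    using assms(2) by simp
next
  case (Suc n)
  have "mpow (P ** M ** Q) (Suc n) = P ** M ** (Q ** P) ** mpow M n ** Q"
    using Suc by (simp add: matrix_mul_assoc)
  then show ?case
    using assms(1) by (simp add: matrix_mul_assoc)
qed

lemma mexp_mk2_diag_conj:
  assumes "Q ** P = mat 1" "P ** Q = mat 1"
  shows "mexp (P ** mk2 x 0 0 y ** Q) = P ** mk2 (exp x) 0 0 (exp y) ** Q"
proof -
  have "(1 / fact n) *\<^sub>R mpow (mk2 x 0 0 y) n = mk2 (x^n /\<^sub>R fact n) 0 0 (y^n /\<^sub>R fact n)" for n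
    by (rule cmat_eqI) (simp_all add: mpow_mk2_diag divide_inverse)
  then have "(\<lambda>n. (1 / fact n) *\<^sub>R mpow (mk2 x 0 0 y) n) sums mk2 (exp x) 0 0 (exp y)"
    using mk2_sums[OF exp_converges sums_zero sums_zero exp_converges, of x y] by simp
  then have "(\<lambda>n. P ** ((1 / fact n) *\<^sub>R mpow (mk2 x 0 0 y) n) ** Q)
      sums (P ** mk2 (exp x) 0 0 (exp y) ** Q)"
    by (rule matrix_conj_sums)
  then have "(\<lambda>n. (1 / fact n) *\<^sub>R mpow (P ** mk2 x 0 0 y ** Q) n)
      sums (P ** mk2 (exp x) 0 0 (exp y) ** Q)"
    unfolding mpow_conj[OF assms] by (simp add: matrix_scalar_ac scalar_matrix_assoc)
  then show ?thesis
    unfolding mexp_def by (rule sums_unique[symmetric])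
qed

lemma mexp_mk2_diag: "mexp (mk2 x 0 0 y) = mk2 (exp x) 0 0 (exp y)"
  using mexp_mk2_diag_conj[of "mat 1" "mat 1" x y] by simp

lemma oneparam_Xm: "oneparam Xm a = mk2 (exp (a/2)) 0 0 (exp (- (a/2)))"
  by (simp add: oneparam_def Xm_def smat_mk2 mexp_mk2_diag)

lemma oneparam_thetam:
  "oneparam thetam t = mk2 (cos (t/2)) (- sin (t/2)) (sin (t/2)) (cos (t/2))"
proof -
  define P where "P = mk2 1 1 (- \<i>) \<i>"
  define Q where "Q = mk2 (1/2) (\<i>/2) (1/2) (- \<i>/2)"
  have PQ: "Q ** P = mat 1" "P ** Q = mat 1"
    by (simp_all add: P_def Q_def mk2_mult mat_1_eq_mk2 mk2_eq_iff field_simps)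
  have "smat t thetam = P ** mk2 (\<i> * (t/2)) 0 0 (- (\<i> * (t/2))) ** Q"
    by (simp add: thetam_def P_def Q_def smat_mk2 mk2_mult mk2_eq_iff field_simps)
  then have "oneparam thetam t = P ** mk2 (exp (\<i> * (t/2))) 0 0 (exp (- (\<i> * (t/2)))) ** Q"
    unfolding oneparam_def by (simp add: mexp_mk2_diag_conj[OF PQ])
  then show ?thesis
    by (simp add: P_def Q_def mk2_mult mk2_eq_iff cos_exp_eq sin_exp_eq field_simps)
qed

lemma Ym_eq: "Ym = mk2 0 (1/2) (1/2) 0"
proof -
  define c where "c = complex_of_real (sqrt 2 / 2)"
  have angles: "complex_of_real (pi/2) / 2 = of_real (pi/4)"
    "complex_of_real (- pi/2) / 2 = - of_real (pi/4)"
    by simp_all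
  have "oneparam thetam (of_real (pi/2)) = mk2 c (- c) c c"
    "oneparam thetam (of_real (- pi/2)) = mk2 c c (- c) c"
    unfolding oneparam_thetam angles cos_minus sin_minus cos_of_real sin_of_real cos_45 sin_45 c_def
    by simp_all
  moreover have "c * c = 1/2"
    unfolding c_def of_real_mult[symmetric] by simp
  ultimately show ?thesis
    by (simp add: Ym_def Xm_def mk2_mult mk2_eq_iff field_simps)
qed

lemma oneparam_Ym:
  "oneparam Ym b = mk2 (cosh (b/2)) (sinh (b/2)) (sinh (b/2)) (cosh (b/2))"
proof -
  define P where "P = mk2 1 1 1 (- 1)"
  define Q where "Q = mk2 (1/2) (1/2) (1/2) (- 1/2)"
  have PQ: "Q ** P = mat 1" "P ** Q = mat 1"
    by (simp_all add: P_def Q_def mk2_mult mat_1_eq_mk2 mk2_eq_iff)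
  have "smat b Ym = P ** mk2 (b/2) 0 0 (- (b/2)) ** Q"
    by (simp add: Ym_eq P_def Q_def smat_mk2 mk2_mult mk2_eq_iff)
  then have "oneparam Ym b = P ** mk2 (exp (b/2)) 0 0 (exp (- (b/2))) ** Q"
    unfolding oneparam_def by (simp add: mexp_mk2_diag_conj[OF PQ])
  then show ?thesis
    by (simp add: P_def Q_def mk2_mult mk2_eq_iff cosh_field_def sinh_field_def field_simps)
qed

lemma oneparam_Xm_conj_Ym:
  "oneparam Ym b ** oneparam Xm a ** oneparam Ym (- b)
     = mk2 (cosh (a/2) + cosh b * sinh (a/2)) (- (sinh b * sinh (a/2)))
           (sinh b * sinh (a/2)) (cosh (a/2) - cosh b * sinh (a/2))"
proof -
  define x where "x = exp (b/2)"
  define y where "y = exp (a/2)"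
  have "x \<noteq> 0" "y \<noteq> 0"
    by (simp_all add: x_def y_def)
  moreover have exps: "exp (- (b/2)) = inverse x" "exp (- (a/2)) = inverse y"
    "exp ((- b)/2) = inverse x" "exp (- ((- b)/2)) = x"
    "exp b = x * x" "exp (- b) = inverse (x * x)"
    by (simp_all add: x_def y_def exp_minus flip: exp_add)
  ultimately show ?thesis
    unfolding oneparam_Ym oneparam_Xm cosh_field_def sinh_field_def exps
      x_def[symmetric] y_def[symmetric]
    by (simp add: mk2_mult mk2_eq_iff field_simps)
qed

lemma oneparam_Xm_conj_Ym_diff_le:
  fixes a a' b b' :: complex
  assumes "\<epsilon> \<le> 1/2" "norm (a - a') \<le> \<epsilon> * norm a" "norm (b - b') \<le> \<epsilon>"
  shows "opnorm (oneparam Ym b ** oneparam Xm a ** oneparam Ym (- b)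
                 - oneparam Ym b' ** oneparam Xm a' ** oneparam Ym (- b'))
           \<le> 11 * exp (norm a + norm b) * norm a * \<epsilon>"
proof -
  define K where "K = \<epsilon> * norm a * exp (norm a)"
  define B where "B = exp (norm b)"
  have "0 \<le> \<epsilon>"
    using assms(3) norm_ge_zero order_trans by blast
  then have "0 \<le> K" "1 \<le> B"
    by (simp_all add: K_def B_def)
  have "\<epsilon> \<le> 1"
    using assms(1) by simp
  note a_bounds = cosh_sinh_half_rel_perturbation[OF assms(2) this, folded K_def]
  note b_bounds = cosh_sinh_perturbation[OF assms(3,1), folded B_def]
  have product: "norm (w * sinh (a/2) - w' * sinh (a'/2)) \<le> 5/2 * B * K"
    if "norm w \<le> B" "norm (w - w') \<le> 2 * \<epsilon> * B" for w w'
  proof -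
    have "norm (w * sinh (a/2) - w' * sinh (a'/2))
        \<le> norm w * norm (sinh (a/2) - sinh (a'/2)) + norm (w - w') * norm (sinh (a'/2))"
      by (rule norm_mult_diff_le)
    also have "\<dots> \<le> B * (K/2) + (2 * \<epsilon> * B) * (norm a * exp (norm a))"
      using that a_bounds \<open>0 \<le> \<epsilon>\<close> \<open>1 \<le> B\<close> by (intro add_mono mult_mono) auto
    also have "\<dots> = 5/2 * B * K"
      by (simp add: K_def algebra_simps)
    finally show ?thesis .
  qed
  define d where "d = cosh (a/2) - cosh (a'/2)"
  define x where "x = cosh b * sinh (a/2) - cosh b' * sinh (a'/2)"
  define y where "y = sinh b * sinh (a/2) - sinh b' * sinh (a'/2)"
  have diff_eq: "oneparam Ym b ** oneparam Xm a ** oneparam Ym (- b)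
          - oneparam Ym b' ** oneparam Xm a' ** oneparam Ym (- b')
        = mk2 (d + x) (- y) y (d - x)"
    by (simp add: oneparam_Xm_conj_Ym mk2_diff mk2_eq_iff d_def x_def y_def algebra_simps)
  have "norm d \<le> K/2" "norm x \<le> 5/2 * B * K" "norm y \<le> 5/2 * B * K"
    using a_bounds(1) product[OF norm_cosh_le_exp_norm[of b, folded B_def] b_bounds(1)]
      product[OF norm_sinh_le_exp_norm[of b, folded B_def] b_bounds(2)]
    by (simp_all add: d_def x_def y_def)
  then have "opnorm (oneparam Ym b ** oneparam Xm a ** oneparam Ym (- b)
                 - oneparam Ym b' ** oneparam Xm a' ** oneparam Ym (- b'))
        \<le> 2 * (K/2 + 5/2 * B * K + 5/2 * B * K)"
    unfolding diff_eq
    by (intro order_trans[OF opnorm_mk2_symmetric_form_le] mult_left_mono add_mono) simp_all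
  also have "\<dots> \<le> 11 * B * K"
    using mult_right_mono[OF \<open>1 \<le> B\<close> \<open>0 \<le> K\<close>] by simp
  also have "\<dots> = 11 * exp (norm a + norm b) * norm a * \<epsilon>"
    by (simp add: K_def B_def exp_add)
  finally show ?thesis .
qed

theorem lemmaA7:
  fixes A \<epsilon> :: real and a b a' b' :: complex
  assumes "A > 0"
    and "2 * cmod a * exp (cmod b + 1) \<le> A"
    and "cmod (b - b') < \<epsilon>"
    and "cmod (a - a') < \<epsilon> * cmod a"
    and "\<epsilon> < min (1 / exp 1) (1 / A)"
  shows "opnorm (oneparam Ym b ** oneparam Xm a ** oneparam Ym (- b)
                 - oneparam Ym b' ** oneparam Xm a' ** oneparam Ym (- b'))
           \<le> 12 * exp (A + cmod b) * cmod a * \<epsilon>"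
proof -
  have "0 < \<epsilon>"
    using assms(3) norm_ge_zero le_less_trans by blast
  have "1 / exp 1 \<le> (1/2 :: real)"
    using exp_ge_add_one_self[of 1] by (simp add: field_simps)
  then have "\<epsilon> \<le> 1/2"
    using assms(5) by linarith
  have "cmod a \<le> cmod a * exp (cmod b + 1)"
    by (simp add: mult_le_cancel_left1)
  also have "\<dots> \<le> 2 * cmod a * exp (cmod b + 1)"
    by simp
  also have "\<dots> \<le> A"
    by (rule assms(2))
  finally have "cmod a \<le> A" .
  have "opnorm (oneparam Ym b ** oneparam Xm a ** oneparam Ym (- b)
                 - oneparam Ym b' ** oneparam Xm a' ** oneparam Ym (- b'))
          \<le> 11 * exp (cmod a + cmod b) * cmod a * \<epsilon>"
    using \<open>\<epsilon> \<le> 1/2\<close> assms(3,4) by (intro oneparam_Xm_conj_Ym_diff_le) simp_all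
  also have "\<dots> \<le> 12 * exp (A + cmod b) * cmod a * \<epsilon>"
    using \<open>cmod a \<le> A\<close> \<open>0 < \<epsilon>\<close> by (intro mult_right_mono mult_mono) simp_all
  finally show ?thesis .
qed

end
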